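(* Let $\ell:K(H\times\mathrm{Id})\to HM$ be an abstract GSOS rule with $\ell$-interpretation $b:KC\to C$. Then every sandwiched $\ell$-equation $e:X\to MHMX$ has a unique solution in $C$, i.e. there is a unique morphism $e^\dagger:X\to C$ such that $$e^\dagger = b^\sharp\cdot Mc^{-1}\cdot MHb^\sharp\cdot MHMe^\dagger\cdot e.$$
   Context: Let $\mathcal A$ be a category with binary products and coproducts, let $H:\mathcal A\to\mathcal A$ be a functor with a terminal coalgebra $c:C\to HC$ (so $c$ is an isomorphism by Lambek's lemma), and let $K:\mathcal A\to\mathcal A$ be a functor such that every object $X$ has a free $K$-algebra $\varphi_X:KMX\to MX$ with universal morphism $\eta_X:X\to MX$. Then $(M,\eta,\mu)$ is the free monad on $K$, where $\mu_X:MMX\to MX$ is the unique $K$-algebra homomorphism $(MMX,\varphi_{MX})\to(MX,\varphi_X)$ with $\mu_X\cdot\eta_{MX}=\mathrm{id}_{MX}$, and $\kappa=\varphi\cdot K\eta:K\to M$. For a $K$-algebra $a:KA\to A$ let $a^\sharp:MA\to A$ be the unique $K$-algebra homomorphism with $a^\sharp\cdot\eta_A=\mathrm{id}_A$; it is an Eilenberg–Moore algebra for $M$ and $a=a^\sharp\cdot\kappa_A$. An abstract GSOS rule is a natural transformation $\ell:K(H\times\mathrm{Id})\to HM$; its $\ell$-interpretation is the unique morphism $b:KC\to C$ with $c\cdot b=Hb^\sharp\cdot\ell_C\cdot K\langle c,\mathrm{id}_C\rangle$ (it exists and is unique). A sandwiched $\ell$-equation is any morphism $e:X\to MHMX$.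 *)

theory Defs
  imports Main
begin

text \<open>Categories are encoded with a single type of objects 'o and a single type
of morphisms 'm. Composition is written Comp g f for the composite g . f
(first f, then g).\<close>

record ('o, 'm) category =
  Obj  :: "'o set"
  Arr  :: "'m set"
  Dom  :: "'m \<Rightarrow> 'o"
  Cod  :: "'m \<Rightarrow> 'o"
  Comp :: "'m \<Rightarrow> 'm \<Rightarrow> 'm"
  Ide  :: "'o \<Rightarrow> 'm"

definition hom :: "('o, 'm) category \<Rightarrow> 'm \<Rightarrow> 'o \<Rightarrow> 'o \<Rightarrow> bool" where
  "hom \<A> f A B \<longleftrightarrow> f \<in> Arr \<A> \<and> Dom \<A> f = A \<and> Cod \<A> f = B"

definition is_category :: "('o, 'm) category \<Rightarrow> bool" where
  "is_category \<A> \<longleftrightarrow>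
     (\<forall>f \<in> Arr \<A>. Dom \<A> f \<in> Obj \<A> \<and> Cod \<A> f \<in> Obj \<A>) \<and>
     (\<forall>A \<in> Obj \<A>. hom \<A> (Ide \<A> A) A A) \<and>
     (\<forall>f g A B C. hom \<A> f A B \<longrightarrow> hom \<A> g B C \<longrightarrow> hom \<A> (Comp \<A> g f) A C) \<and>
     (\<forall>f g h A B C D. hom \<A> f A B \<longrightarrow> hom \<A> g B C \<longrightarrow> hom \<A> h C D \<longrightarrow>
         Comp \<A> h (Comp \<A> g f) = Comp \<A> (Comp \<A> h g) f) \<and>
     (\<forall>f A B. hom \<A> f A B \<longrightarrow> Comp \<A> f (Ide \<A> A) = f \<and> Comp \<A> (Ide \<A> B) f = f)"

definition is_endofunctor ::
  "('o, 'm) category \<Rightarrow> ('o \<Rightarrow> 'o) \<Rightarrow> ('m \<Rightarrow> 'm) \<Rightarrow> bool" where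
  "is_endofunctor \<A> Fo Fm \<longleftrightarrow>
     (\<forall>A \<in> Obj \<A>. Fo A \<in> Obj \<A> \<and> Fm (Ide \<A> A) = Ide \<A> (Fo A)) \<and>
     (\<forall>f A B. hom \<A> f A B \<longrightarrow> hom \<A> (Fm f) (Fo A) (Fo B)) \<and>
     (\<forall>f g A B C. hom \<A> f A B \<longrightarrow> hom \<A> g B C \<longrightarrow>
         Fm (Comp \<A> g f) = Comp \<A> (Fm g) (Fm f))"

definition is_product ::
  "('o, 'm) category \<Rightarrow> 'o \<Rightarrow> 'o \<Rightarrow> 'o \<Rightarrow> 'm \<Rightarrow> 'm \<Rightarrow> bool" where
  "is_product \<A> A B P p q \<longleftrightarrow>
     P \<in> Obj \<A> \<and> hom \<A> p P A \<and> hom \<A> q P B \<and>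
     (\<forall>Z f g. hom \<A> f Z A \<longrightarrow> hom \<A> g Z B \<longrightarrow>
        (\<exists>!h. hom \<A> h Z P \<and> Comp \<A> p h = f \<and> Comp \<A> q h = g))"

definition has_chosen_products ::
  "('o, 'm) category \<Rightarrow> ('o \<Rightarrow> 'o \<Rightarrow> 'o) \<Rightarrow> ('o \<Rightarrow> 'o \<Rightarrow> 'm) \<Rightarrow> ('o \<Rightarrow> 'o \<Rightarrow> 'm) \<Rightarrow> bool" where
  "has_chosen_products \<A> P p1 p2 \<longleftrightarrow>
     (\<forall>A \<in> Obj \<A>. \<forall>B \<in> Obj \<A>. is_product \<A> A B (P A B) (p1 A B) (p2 A B))"

definition is_coproduct ::
  "('o, 'm) category \<Rightarrow> 'o \<Rightarrow> 'o \<Rightarrow> 'o \<Rightarrow> 'm \<Rightarrow> 'm \<Rightarrow> bool" where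
  "is_coproduct \<A> A B S i j \<longleftrightarrow>
     S \<in> Obj \<A> \<and> hom \<A> i A S \<and> hom \<A> j B S \<and>
     (\<forall>Z f g. hom \<A> f A Z \<longrightarrow> hom \<A> g B Z \<longrightarrow>
        (\<exists>!h. hom \<A> h S Z \<and> Comp \<A> h i = f \<and> Comp \<A> h j = g))"

definition has_binary_coproducts :: "('o, 'm) category \<Rightarrow> bool" where
  "has_binary_coproducts \<A> \<longleftrightarrow>
     (\<forall>A \<in> Obj \<A>. \<forall>B \<in> Obj \<A>. \<exists>S i j. is_coproduct \<A> A B S i j)"

definition pairing ::
  "('o, 'm) category \<Rightarrow> ('o \<Rightarrow> 'o \<Rightarrow> 'o) \<Rightarrow> ('o \<Rightarrow> 'o \<Rightarrow> 'm) \<Rightarrow> ('o \<Rightarrow> 'o \<Rightarrow> 'm)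
     \<Rightarrow> 'm \<Rightarrow> 'm \<Rightarrow> 'm" where
  "pairing \<A> P p1 p2 f g =
     (THE h. hom \<A> h (Dom \<A> f) (P (Cod \<A> f) (Cod \<A> g)) \<and>
             Comp \<A> (p1 (Cod \<A> f) (Cod \<A> g)) h = f \<and>
             Comp \<A> (p2 (Cod \<A> f) (Cod \<A> g)) h = g)"

text \<open>The functor H x Id on morphisms: f : A -> B goes to
  <Hf . pi1, f . pi2> : HA x A -> HB x B.\<close>

definition prodId_mor ::
  "('o, 'm) category \<Rightarrow> ('o \<Rightarrow> 'o \<Rightarrow> 'o) \<Rightarrow> ('o \<Rightarrow> 'o \<Rightarrow> 'm) \<Rightarrow> ('o \<Rightarrow> 'o \<Rightarrow> 'm)
     \<Rightarrow> ('o \<Rightarrow> 'o) \<Rightarrow> ('m \<Rightarrow> 'm) \<Rightarrow> 'm \<Rightarrow> 'm" where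
  "prodId_mor \<A> P p1 p2 Ho Hm f =
     pairing \<A> P p1 p2
       (Comp \<A> (Hm f) (p1 (Ho (Dom \<A> f)) (Dom \<A> f)))
       (Comp \<A> f (p2 (Ho (Dom \<A> f)) (Dom \<A> f)))"

definition is_alg :: "('o, 'm) category \<Rightarrow> ('o \<Rightarrow> 'o) \<Rightarrow> 'o \<Rightarrow> 'm \<Rightarrow> bool" where
  "is_alg \<A> Ko A a \<longleftrightarrow> A \<in> Obj \<A> \<and> hom \<A> a (Ko A) A"

definition is_alg_hom ::
  "('o, 'm) category \<Rightarrow> ('o \<Rightarrow> 'o) \<Rightarrow> ('m \<Rightarrow> 'm) \<Rightarrow> 'o \<Rightarrow> 'm \<Rightarrow> 'o \<Rightarrow> 'm \<Rightarrow> 'm \<Rightarrow> bool" where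
  "is_alg_hom \<A> Ko Km A a B b h \<longleftrightarrow>
     hom \<A> h A B \<and> Comp \<A> h a = Comp \<A> b (Km h)"

definition has_free_algebras ::
  "('o, 'm) category \<Rightarrow> ('o \<Rightarrow> 'o) \<Rightarrow> ('m \<Rightarrow> 'm) \<Rightarrow> ('o \<Rightarrow> 'o) \<Rightarrow> ('o \<Rightarrow> 'm)
     \<Rightarrow> ('o \<Rightarrow> 'm) \<Rightarrow> bool" where
  "has_free_algebras \<A> Ko Km Mo phi eta \<longleftrightarrow>
     (\<forall>X \<in> Obj \<A>. is_alg \<A> Ko (Mo X) (phi X) \<and> hom \<A> (eta X) X (Mo X) \<and>
        (\<forall>A a f. is_alg \<A> Ko A a \<longrightarrow> hom \<A> f X A \<longrightarrow>
           (\<exists>!h. is_alg_hom \<A> Ko Km (Mo X) (phi X) A a h \<and> Comp \<A> h (eta X) = f)))"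

definition M_mor ::
  "('o, 'm) category \<Rightarrow> ('o \<Rightarrow> 'o) \<Rightarrow> ('m \<Rightarrow> 'm) \<Rightarrow> ('o \<Rightarrow> 'o) \<Rightarrow> ('o \<Rightarrow> 'm)
     \<Rightarrow> ('o \<Rightarrow> 'm) \<Rightarrow> 'm \<Rightarrow> 'm" where
  "M_mor \<A> Ko Km Mo phi eta f =
     (THE h. is_alg_hom \<A> Ko Km (Mo (Dom \<A> f)) (phi (Dom \<A> f)) (Mo (Cod \<A> f)) (phi (Cod \<A> f)) h
             \<and> Comp \<A> h (eta (Dom \<A> f)) = Comp \<A> (eta (Cod \<A> f)) f)"

definition sharp ::
  "('o, 'm) category \<Rightarrow> ('o \<Rightarrow> 'o) \<Rightarrow> ('m \<Rightarrow> 'm) \<Rightarrow> ('o \<Rightarrow> 'o) \<Rightarrow> ('o \<Rightarrow> 'm)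
     \<Rightarrow> ('o \<Rightarrow> 'm) \<Rightarrow> 'o \<Rightarrow> 'm \<Rightarrow> 'm" where
  "sharp \<A> Ko Km Mo phi eta A a =
     (THE h. is_alg_hom \<A> Ko Km (Mo A) (phi A) A a h \<and> Comp \<A> h (eta A) = Ide \<A> A)"

definition is_terminal_coalg ::
  "('o, 'm) category \<Rightarrow> ('o \<Rightarrow> 'o) \<Rightarrow> ('m \<Rightarrow> 'm) \<Rightarrow> 'o \<Rightarrow> 'm \<Rightarrow> bool" where
  "is_terminal_coalg \<A> Ho Hm C c \<longleftrightarrow>
     C \<in> Obj \<A> \<and> hom \<A> c C (Ho C) \<and>
     (\<forall>A a. A \<in> Obj \<A> \<longrightarrow> hom \<A> a A (Ho A) \<longrightarrow>
        (\<exists>!h. hom \<A> h A C \<and> Comp \<A> c h = Comp \<A> (Hm h) a))"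

definition inverse_mor :: "('o, 'm) category \<Rightarrow> 'm \<Rightarrow> 'm" where
  "inverse_mor \<A> f =
     (THE g. hom \<A> g (Cod \<A> f) (Dom \<A> f) \<and> Comp \<A> g f = Ide \<A> (Dom \<A> f)
             \<and> Comp \<A> f g = Ide \<A> (Cod \<A> f))"

definition is_gsos_rule ::
  "('o, 'm) category \<Rightarrow> ('o \<Rightarrow> 'o \<Rightarrow> 'o) \<Rightarrow> ('o \<Rightarrow> 'o \<Rightarrow> 'm) \<Rightarrow> ('o \<Rightarrow> 'o \<Rightarrow> 'm)
     \<Rightarrow> ('o \<Rightarrow> 'o) \<Rightarrow> ('m \<Rightarrow> 'm) \<Rightarrow> ('o \<Rightarrow> 'o) \<Rightarrow> ('m \<Rightarrow> 'm) \<Rightarrow> ('o \<Rightarrow> 'o) \<Rightarrow> ('o \<Rightarrow> 'm)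
     \<Rightarrow> ('o \<Rightarrow> 'm) \<Rightarrow> ('o \<Rightarrow> 'm) \<Rightarrow> bool" where
  "is_gsos_rule \<A> P p1 p2 Ho Hm Ko Km Mo phi eta l \<longleftrightarrow>
     (\<forall>X \<in> Obj \<A>. hom \<A> (l X) (Ko (P (Ho X) X)) (Ho (Mo X))) \<and>
     (\<forall>f X Y. hom \<A> f X Y \<longrightarrow>
        Comp \<A> (l Y) (Km (prodId_mor \<A> P p1 p2 Ho Hm f))
        = Comp \<A> (Hm (M_mor \<A> Ko Km Mo phi eta f)) (l X))"

definition is_interpretation ::
  "('o, 'm) category \<Rightarrow> ('o \<Rightarrow> 'o \<Rightarrow> 'o) \<Rightarrow> ('o \<Rightarrow> 'o \<Rightarrow> 'm) \<Rightarrow> ('o \<Rightarrow> 'o \<Rightarrow> 'm)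
     \<Rightarrow> ('o \<Rightarrow> 'o) \<Rightarrow> ('m \<Rightarrow> 'm) \<Rightarrow> ('o \<Rightarrow> 'o) \<Rightarrow> ('m \<Rightarrow> 'm) \<Rightarrow> ('o \<Rightarrow> 'o) \<Rightarrow> ('o \<Rightarrow> 'm)
     \<Rightarrow> ('o \<Rightarrow> 'm) \<Rightarrow> ('o \<Rightarrow> 'm) \<Rightarrow> 'o \<Rightarrow> 'm \<Rightarrow> 'm \<Rightarrow> bool" where
  "is_interpretation \<A> P p1 p2 Ho Hm Ko Km Mo phi eta l C c b \<longleftrightarrow>
     hom \<A> b (Ko C) C \<and>
     Comp \<A> c b =
       Comp \<A> (Hm (sharp \<A> Ko Km Mo phi eta C b))
         (Comp \<A> (l C) (Km (pairing \<A> P p1 p2 c (Ide \<A> C))))"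

end

theory Submission
  imports Defs
begin

text \<open>Put Y = HMX and \<xi> = H(\<mu> \<cdot> Me) : Y \<rightarrow> HMY. Lifting l along the free monad turns \<xi> into an
  l-bialgebra structure on the free algebra MY, so the unique coalgebra morphism g : MY \<rightarrow> C is
  also a K-algebra morphism into (C, b); conversely, an algebra morphism h : MY \<rightarrow> C with
  c \<cdot> h \<cdot> \<eta> = Hh \<cdot> \<xi> is a coalgebra morphism. Hence the guarded equation
  c \<cdot> s = H(b\<sharp> \<cdot> Ms) \<cdot> \<xi> has exactly one solution, s = g \<cdot> \<eta>. The sandwiched equation is the
  same fixed point problem rolled: with k d = c\<inverse> \<cdot> H(b\<sharp> \<cdot> Md) and D s = b\<sharp> \<cdot> Ms \<cdot> e its
  solutions are the fixed points of D \<circ> k, while b\<sharp> \<cdot> M(b\<sharp> \<cdot> Ms \<cdot> e) = b\<sharp> \<cdot> Ms \<cdot> \<mu> \<cdot> Me shows that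
  the fixed points of k \<circ> D are the solutions of the guarded equation.\<close>

lemma ex1_fixpoint_rolling:
  assumes "\<exists>!s. S s \<and> k (D s) = s" and "\<And>s. S s \<Longrightarrow> T (D s)" and "\<And>d. T d \<Longrightarrow> S (k d)"
  shows "\<exists>!d. T d \<and> D (k d) = d"
proof -
  obtain s where s: "S s" "k (D s) = s"
    using assms(1) by blast
  show ?thesis
  proof (rule ex1I[of _ "D s"])
    show "T (D s) \<and> D (k (D s)) = D s"
      using s assms(2) by simp
    fix d
    assume d: "T d \<and> D (k d) = d"
    then have "S (k d)" "k (D (k d)) = k d"
      using assms(3) by auto
    then have "k d = s"
      using assms(1) s by blast
    then show "d = D s"
      using d by simp
  qed
qed

locale category =
  fixes \<A> :: "('o, 'm) category"
  assumes is_category: "is_category \<A>"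
begin

abbreviation arr where "arr f \<equiv> f \<in> Arr \<A>"
abbreviation obj where "obj A \<equiv> A \<in> Obj \<A>"
abbreviation dm where "dm f \<equiv> Dom \<A> f"
abbreviation cd where "cd f \<equiv> Cod \<A> f"
abbreviation I where "I A \<equiv> Ide \<A> A"
abbreviation comp (infixr "\<cdot>" 55) where "g \<cdot> f \<equiv> Comp \<A> g f"

lemma hom_iff: "hom \<A> f A B \<longleftrightarrow> arr f \<and> dm f = A \<and> cd f = B"
  by (simp add: hom_def)

lemma obj_dm [simp]: "arr f \<Longrightarrow> obj (dm f)"
  and obj_cd [simp]: "arr f \<Longrightarrow> obj (cd f)"
  using is_category unfolding is_category_def by auto

lemma arr_comp [simp]: "arr f \<Longrightarrow> arr g \<Longrightarrow> cd f = dm g \<Longrightarrow> arr (g \<cdot> f)"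
  and dm_comp [simp]: "arr f \<Longrightarrow> arr g \<Longrightarrow> cd f = dm g \<Longrightarrow> dm (g \<cdot> f) = dm f"
  and cd_comp [simp]: "arr f \<Longrightarrow> arr g \<Longrightarrow> cd f = dm g \<Longrightarrow> cd (g \<cdot> f) = cd g"
  using is_category unfolding is_category_def hom_iff by metis+

lemma arr_I [simp]: "obj A \<Longrightarrow> arr (I A)"
  and dm_I [simp]: "obj A \<Longrightarrow> dm (I A) = A"
  and cd_I [simp]: "obj A \<Longrightarrow> cd (I A) = A"
  using is_category unfolding is_category_def hom_iff by auto

lemma comp_I_left [simp]: "arr f \<Longrightarrow> cd f = B \<Longrightarrow> I B \<cdot> f = f"
  and comp_I_right [simp]: "arr f \<Longrightarrow> dm f = A \<Longrightarrow> f \<cdot> I A = f"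
  using is_category unfolding is_category_def hom_iff by auto

lemma comp_assoc [simp]:
  "arr f \<Longrightarrow> arr g \<Longrightarrow> arr h \<Longrightarrow> cd f = dm g \<Longrightarrow> cd g = dm h \<Longrightarrow> (h \<cdot> g) \<cdot> f = h \<cdot> g \<cdot> f"
  using is_category unfolding is_category_def hom_iff by metis

text \<open>The simplifier keeps composites right-associated; the primed simp rules below are the
  variants of equations between composites that still apply inside that normal form.\<close>

lemma comp_reassoc:
  assumes "g \<cdot> f = k" "arr f" "arr g" "arr w" "cd f = dm g" "cd w = dm f"
  shows "g \<cdot> f \<cdot> w = k \<cdot> w"
  using comp_assoc[of w f g] assms by simp

lemma comp_reassoc2:
  assumes "g \<cdot> f = k1 \<cdot> k2" "arr f" "arr g" "arr w" "arr k1" "arr k2"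
    "cd f = dm g" "cd w = dm f" "cd k2 = dm k1" "dm k2 = dm f"
  shows "g \<cdot> f \<cdot> w = k1 \<cdot> k2 \<cdot> w"
  by (metis assms comp_assoc)

end

locale endofunctor = category \<A> for \<A> :: "('o, 'm) category" +
  fixes Fo :: "'o \<Rightarrow> 'o" and Fm :: "'m \<Rightarrow> 'm"
  assumes is_endofunctor: "is_endofunctor \<A> Fo Fm"
begin

lemma arr_map [simp]: "arr f \<Longrightarrow> arr (Fm f)"
  and dm_map [simp]: "arr f \<Longrightarrow> dm (Fm f) = Fo (dm f)"
  and cd_map [simp]: "arr f \<Longrightarrow> cd (Fm f) = Fo (cd f)"
  and obj_map [simp]: "obj A \<Longrightarrow> obj (Fo A)"
  and map_I [simp]: "obj A \<Longrightarrow> Fm (I A) = I (Fo A)"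
  using is_endofunctor unfolding is_endofunctor_def hom_iff by auto

lemma map_comp [simp]: "arr f \<Longrightarrow> arr g \<Longrightarrow> cd f = dm g \<Longrightarrow> Fm (g \<cdot> f) = Fm g \<cdot> Fm f"
  using is_endofunctor unfolding is_endofunctor_def hom_iff by auto

end

locale cartesian_category = category \<A> for \<A> :: "('o, 'm) category" +
  fixes P :: "'o \<Rightarrow> 'o \<Rightarrow> 'o" and p1 p2 :: "'o \<Rightarrow> 'o \<Rightarrow> 'm"
  assumes has_chosen_products: "has_chosen_products \<A> P p1 p2"
begin

abbreviation pair where "pair f g \<equiv> pairing \<A> P p1 p2 f g"

lemma obj_P [simp]: "obj A \<Longrightarrow> obj B \<Longrightarrow> obj (P A B)"
  and arr_p1 [simp]: "obj A \<Longrightarrow> obj B \<Longrightarrow> arr (p1 A B)"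
  and dm_p1 [simp]: "obj A \<Longrightarrow> obj B \<Longrightarrow> dm (p1 A B) = P A B"
  and cd_p1 [simp]: "obj A \<Longrightarrow> obj B \<Longrightarrow> cd (p1 A B) = A"
  and arr_p2 [simp]: "obj A \<Longrightarrow> obj B \<Longrightarrow> arr (p2 A B)"
  and dm_p2 [simp]: "obj A \<Longrightarrow> obj B \<Longrightarrow> dm (p2 A B) = P A B"
  and cd_p2 [simp]: "obj A \<Longrightarrow> obj B \<Longrightarrow> cd (p2 A B) = B"
  using has_chosen_products unfolding has_chosen_products_def is_product_def hom_iff by auto

lemma product_universal:
  assumes "obj A" "obj B" "arr f" "arr g" "dm f = dm g" "cd f = A" "cd g = B"
  shows "\<exists>!h. hom \<A> h (dm f) (P A B) \<and> p1 A B \<cdot> h = f \<and> p2 A B \<cdot> h = g"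
proof -
  have "is_product \<A> A B (P A B) (p1 A B) (p2 A B)"
    using has_chosen_products assms(1,2) unfolding has_chosen_products_def by blast
  moreover have "hom \<A> f (dm f) A" "hom \<A> g (dm f) B"
    using assms by (auto simp: hom_iff)
  ultimately show ?thesis
    unfolding is_product_def by blast
qed

lemma pair_props:
  assumes "arr f" "arr g" "dm f = dm g"
  shows "hom \<A> (pair f g) (dm f) (P (cd f) (cd g)) \<and>
    p1 (cd f) (cd g) \<cdot> pair f g = f \<and> p2 (cd f) (cd g) \<cdot> pair f g = g"
  unfolding pairing_def by (rule theI'[OF product_universal]) (use assms in auto)

lemma arr_pair [simp]: "arr f \<Longrightarrow> arr g \<Longrightarrow> dm f = dm g \<Longrightarrow> arr (pair f g)"
  and dm_pair [simp]: "arr f \<Longrightarrow> arr g \<Longrightarrow> dm f = dm g \<Longrightarrow> dm (pair f g) = dm f"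
  and cd_pair [simp]: "arr f \<Longrightarrow> arr g \<Longrightarrow> dm f = dm g \<Longrightarrow> cd (pair f g) = P (cd f) (cd g)"
  using pair_props by (auto simp: hom_iff)

lemma p1_pair [simp]: "arr f \<Longrightarrow> arr g \<Longrightarrow> dm f = dm g \<Longrightarrow> cd f = A \<Longrightarrow> cd g = B \<Longrightarrow>
    p1 A B \<cdot> pair f g = f"
  and p2_pair [simp]: "arr f \<Longrightarrow> arr g \<Longrightarrow> dm f = dm g \<Longrightarrow> cd f = A \<Longrightarrow> cd g = B \<Longrightarrow>
    p2 A B \<cdot> pair f g = g"
  using pair_props by blast+

lemma p1_pair' [simp]: "arr f \<Longrightarrow> arr g \<Longrightarrow> dm f = dm g \<Longrightarrow> cd f = A \<Longrightarrow> cd g = B \<Longrightarrow>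
    arr w \<Longrightarrow> cd w = dm f \<Longrightarrow> p1 A B \<cdot> pair f g \<cdot> w = f \<cdot> w"
  and p2_pair' [simp]: "arr f \<Longrightarrow> arr g \<Longrightarrow> dm f = dm g \<Longrightarrow> cd f = A \<Longrightarrow> cd g = B \<Longrightarrow>
    arr w \<Longrightarrow> cd w = dm f \<Longrightarrow> p2 A B \<cdot> pair f g \<cdot> w = g \<cdot> w"
  by (rule comp_reassoc, auto)+

lemma product_ext:
  assumes "obj A" "obj B" "arr h1" "arr h2" "dm h1 = dm h2" "cd h1 = P A B" "cd h2 = P A B"
    and "p1 A B \<cdot> h1 = p1 A B \<cdot> h2" "p2 A B \<cdot> h1 = p2 A B \<cdot> h2"
  shows "h1 = h2"
  using product_universal[of A B "p1 A B \<cdot> h1" "p2 A B \<cdot> h1"] assms by (auto simp: hom_iff)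

lemma pair_unique:
  assumes "obj A" "obj B" "arr h" "cd h = P A B" "p1 A B \<cdot> h = f" "p2 A B \<cdot> h = g"
  shows "h = pair f g"
  by (rule product_ext[OF assms(1,2)]) (use assms in auto)

lemma pair_comp [simp]:
  assumes "arr f" "arr g" "arr h" "dm f = dm g" "cd h = dm f"
  shows "pair f g \<cdot> h = pair (f \<cdot> h) (g \<cdot> h)"
proof (rule pair_unique[of "cd f" "cd g"])
  show "p1 (cd f) (cd g) \<cdot> pair f g \<cdot> h = f \<cdot> h" "p2 (cd f) (cd g) \<cdot> pair f g \<cdot> h = g \<cdot> h"
    using assms by simp_all
qed (use assms in auto)

definition cross where
  "cross f g = pair (f \<cdot> p1 (dm f) (dm g)) (g \<cdot> p2 (dm f) (dm g))"

lemma arr_cross [simp]: "arr f \<Longrightarrow> arr g \<Longrightarrow> arr (cross f g)"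
  and dm_cross [simp]: "arr f \<Longrightarrow> arr g \<Longrightarrow> dm (cross f g) = P (dm f) (dm g)"
  and cd_cross [simp]: "arr f \<Longrightarrow> arr g \<Longrightarrow> cd (cross f g) = P (cd f) (cd g)"
  unfolding cross_def by auto

lemma cross_pair [simp]:
  "arr f \<Longrightarrow> arr g \<Longrightarrow> arr u \<Longrightarrow> arr v \<Longrightarrow> dm u = dm v \<Longrightarrow> cd u = dm f \<Longrightarrow> cd v = dm g \<Longrightarrow>
    cross f g \<cdot> pair u v = pair (f \<cdot> u) (g \<cdot> v)"
  unfolding cross_def by simp

lemma cross_cross [simp]:
  "arr f \<Longrightarrow> arr g \<Longrightarrow> arr f' \<Longrightarrow> arr g' \<Longrightarrow> cd f' = dm f \<Longrightarrow> cd g' = dm g \<Longrightarrow>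
    cross f g \<cdot> cross f' g' = cross (f \<cdot> f') (g \<cdot> g')"
  by (subst (2) cross_def) (simp add: cross_def[of "f \<cdot> f'"])

lemma p1_cross [simp]: "arr f \<Longrightarrow> arr g \<Longrightarrow> cd f = A \<Longrightarrow> cd g = B \<Longrightarrow>
    p1 A B \<cdot> cross f g = f \<cdot> p1 (dm f) (dm g)"
  and p2_cross [simp]: "arr f \<Longrightarrow> arr g \<Longrightarrow> cd f = A \<Longrightarrow> cd g = B \<Longrightarrow>
    p2 A B \<cdot> cross f g = g \<cdot> p2 (dm f) (dm g)"
  unfolding cross_def by simp_all

lemma p1_cross' [simp]: "arr f \<Longrightarrow> arr g \<Longrightarrow> cd f = A \<Longrightarrow> cd g = B \<Longrightarrow>
    arr w \<Longrightarrow> cd w = P (dm f) (dm g) \<Longrightarrow> p1 A B \<cdot> cross f g \<cdot> w = f \<cdot> p1 (dm f) (dm g) \<cdot> w"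
  and p2_cross' [simp]: "arr f \<Longrightarrow> arr g \<Longrightarrow> cd f = A \<Longrightarrow> cd g = B \<Longrightarrow>
    arr w \<Longrightarrow> cd w = P (dm f) (dm g) \<Longrightarrow> p2 A B \<cdot> cross f g \<cdot> w = g \<cdot> p2 (dm f) (dm g) \<cdot> w"
  by (rule comp_reassoc2, auto)+

end

locale free_algebras = category \<A> + K: endofunctor \<A> Ko Km
  for \<A> :: "('o, 'm) category" and Ko :: "'o \<Rightarrow> 'o" and Km :: "'m \<Rightarrow> 'm" +
  fixes Mo :: "'o \<Rightarrow> 'o" and phi eta :: "'o \<Rightarrow> 'm"
  assumes has_free_algebras: "has_free_algebras \<A> Ko Km Mo phi eta"
begin

abbreviation alg where "alg A a \<equiv> is_alg \<A> Ko A a"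
abbreviation alg_hom where "alg_hom A a B b h \<equiv> is_alg_hom \<A> Ko Km A a B b h"
abbreviation Mm where "Mm f \<equiv> M_mor \<A> Ko Km Mo phi eta f"
abbreviation sh where "sh A a \<equiv> sharp \<A> Ko Km Mo phi eta A a"
abbreviation mu where "mu X \<equiv> sh (Mo X) (phi X)"

lemma alg_iff: "alg A a \<longleftrightarrow> arr a \<and> dm a = Ko A \<and> cd a = A"
  unfolding is_alg_def hom_iff by auto

lemma alg_hom_iff: "alg_hom A a B b h \<longleftrightarrow> arr h \<and> dm h = A \<and> cd h = B \<and> h \<cdot> a = b \<cdot> Km h"
  unfolding is_alg_hom_def hom_iff by auto

lemma obj_alg: "alg A a \<Longrightarrow> obj A"
  unfolding is_alg_def by blast

lemma obj_Mo [simp]: "obj X \<Longrightarrow> obj (Mo X)"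
  and arr_phi [simp]: "obj X \<Longrightarrow> arr (phi X)"
  and dm_phi [simp]: "obj X \<Longrightarrow> dm (phi X) = Ko (Mo X)"
  and cd_phi [simp]: "obj X \<Longrightarrow> cd (phi X) = Mo X"
  and arr_eta [simp]: "obj X \<Longrightarrow> arr (eta X)"
  and dm_eta [simp]: "obj X \<Longrightarrow> dm (eta X) = X"
  and cd_eta [simp]: "obj X \<Longrightarrow> cd (eta X) = Mo X"
  using has_free_algebras unfolding has_free_algebras_def is_alg_def hom_iff by auto

lemma alg_phi [simp]: "obj X \<Longrightarrow> alg (Mo X) (phi X)"
  by (simp add: alg_iff)

lemma free_alg_universal:
  assumes "obj X" "alg A a" "arr f" "dm f = X" "cd f = A"
  shows "\<exists>!h. alg_hom (Mo X) (phi X) A a h \<and> h \<cdot> eta X = f"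
  using has_free_algebras assms unfolding has_free_algebras_def hom_iff by blast

lemma free_alg_hom_ext:
  assumes "obj X" "alg A a" "alg_hom (Mo X) (phi X) A a h1" "alg_hom (Mo X) (phi X) A a h2"
    and "h1 \<cdot> eta X = h2 \<cdot> eta X"
  shows "h1 = h2"
  using free_alg_universal[OF assms(1,2), of "h1 \<cdot> eta X"] assms by (auto simp: alg_hom_iff)

lemma alg_hom_comp:
  assumes "alg_hom A a B a' h" "alg_hom B a' D a'' k" "alg A a" "alg B a'" "alg D a''"
  shows "alg_hom A a D a'' (k \<cdot> h)"
proof -
  have h: "arr h" "dm h = A" "cd h = B" "h \<cdot> a = a' \<cdot> Km h"
    and k: "arr k" "dm k = B" "cd k = D" "k \<cdot> a' = a'' \<cdot> Km k"
    using assms(1,2) by (auto simp: alg_hom_iff)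
  have "(k \<cdot> h) \<cdot> a = k \<cdot> a' \<cdot> Km h" using assms(3) h k by (simp add: alg_iff)
  also have "\<dots> = a'' \<cdot> Km k \<cdot> Km h"
    by (rule comp_reassoc2) (use assms(4,5) h k in \<open>auto simp: alg_iff\<close>)
  also have "\<dots> = a'' \<cdot> Km (k \<cdot> h)" using h k by simp
  finally show ?thesis using h k by (simp add: alg_hom_iff)
qed

lemma alg_hom_I: "alg A a \<Longrightarrow> alg_hom A a A a (I A)"
  by (auto simp: alg_iff alg_hom_iff dest: obj_alg)

lemma M_props:
  assumes "arr f"
  shows "alg_hom (Mo (dm f)) (phi (dm f)) (Mo (cd f)) (phi (cd f)) (Mm f) \<and>
    Mm f \<cdot> eta (dm f) = eta (cd f) \<cdot> f"
  unfolding M_mor_def by (rule theI'[OF free_alg_universal]) (use assms in auto)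

lemma arr_M [simp]: "arr f \<Longrightarrow> arr (Mm f)"
  and dm_M [simp]: "arr f \<Longrightarrow> dm (Mm f) = Mo (dm f)"
  and cd_M [simp]: "arr f \<Longrightarrow> cd (Mm f) = Mo (cd f)"
  using M_props by (auto simp: alg_hom_iff)

lemma alg_hom_M: "arr f \<Longrightarrow> dm f = A \<Longrightarrow> cd f = B \<Longrightarrow> alg_hom (Mo A) (phi A) (Mo B) (phi B) (Mm f)"
  using M_props by blast

lemma M_eta [simp]: "arr f \<Longrightarrow> dm f = A \<Longrightarrow> Mm f \<cdot> eta A = eta (cd f) \<cdot> f"
  using M_props by blast

lemma M_phi [simp]: "arr f \<Longrightarrow> dm f = A \<Longrightarrow> Mm f \<cdot> phi A = phi (cd f) \<cdot> Km (Mm f)"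
  using M_props by (auto simp: alg_hom_iff)

lemma M_eta' [simp]: "arr f \<Longrightarrow> dm f = A \<Longrightarrow> arr w \<Longrightarrow> cd w = A \<Longrightarrow>
    Mm f \<cdot> eta A \<cdot> w = eta (cd f) \<cdot> f \<cdot> w"
  by (rule comp_reassoc2) auto

lemma M_phi' [simp]: "arr f \<Longrightarrow> dm f = A \<Longrightarrow> arr w \<Longrightarrow> cd w = Ko (Mo A) \<Longrightarrow>
    Mm f \<cdot> phi A \<cdot> w = phi (cd f) \<cdot> Km (Mm f) \<cdot> w"
  by (rule comp_reassoc2) auto

lemma M_comp [simp]:
  assumes "arr f" "arr g" "cd f = dm g"
  shows "Mm (g \<cdot> f) = Mm g \<cdot> Mm f"
proof (rule free_alg_hom_ext[of "dm f" "Mo (cd g)" "phi (cd g)"])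
  show "alg_hom (Mo (dm f)) (phi (dm f)) (Mo (cd g)) (phi (cd g)) (Mm g \<cdot> Mm f)"
    using assms by (intro alg_hom_comp[of _ _ "Mo (dm g)" "phi (dm g)"] alg_hom_M) auto
qed (use assms in \<open>auto intro: alg_hom_M\<close>)

lemma sharp_props:
  assumes "alg A a"
  shows "alg_hom (Mo A) (phi A) A a (sh A a) \<and> sh A a \<cdot> eta A = I A"
  unfolding sharp_def by (rule theI'[OF free_alg_universal]) (use assms obj_alg in auto)

lemma arr_sharp [simp]: "alg A a \<Longrightarrow> arr (sh A a)"
  and dm_sharp [simp]: "alg A a \<Longrightarrow> dm (sh A a) = Mo A"
  and cd_sharp [simp]: "alg A a \<Longrightarrow> cd (sh A a) = A"
  using sharp_props by (auto simp: alg_hom_iff)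

lemma alg_hom_sharp: "alg A a \<Longrightarrow> alg_hom (Mo A) (phi A) A a (sh A a)"
  using sharp_props by blast

lemma sharp_eta [simp]: "alg A a \<Longrightarrow> sh A a \<cdot> eta A = I A"
  using sharp_props by blast

lemma sharp_phi [simp]: "alg A a \<Longrightarrow> sh A a \<cdot> phi A = a \<cdot> Km (sh A a)"
  using sharp_props by (auto simp: alg_hom_iff)

lemma sharp_eta' [simp]:
  assumes "alg A a" "arr w" "cd w = A"
  shows "sh A a \<cdot> eta A \<cdot> w = w"
proof -
  have "sh A a \<cdot> eta A \<cdot> w = I A \<cdot> w"
    by (rule comp_reassoc) (use assms obj_alg in auto)
  then show ?thesis using assms by simp
qed

lemma sharp_phi' [simp]: "alg A a \<Longrightarrow> arr w \<Longrightarrow> cd w = Ko (Mo A) \<Longrightarrow>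
    sh A a \<cdot> phi A \<cdot> w = a \<cdot> Km (sh A a) \<cdot> w"
  by (rule comp_reassoc2) (auto simp: alg_iff dest: obj_alg)

lemma sharp_M_alg_hom:
  assumes "obj Y" "alg A a" "alg_hom (Mo Y) (phi Y) A a h"
  shows "sh A a \<cdot> Mm h = h \<cdot> mu Y"
proof (rule free_alg_hom_ext[of "Mo Y" A a])
  have h: "arr h" "dm h = Mo Y" "cd h = A" using assms(3) by (auto simp: alg_hom_iff)
  show "alg_hom (Mo (Mo Y)) (phi (Mo Y)) A a (sh A a \<cdot> Mm h)"
    using assms h by (intro alg_hom_comp[of _ _ "Mo A" "phi A"] alg_hom_M alg_hom_sharp)
      (auto dest: obj_alg)
  show "alg_hom (Mo (Mo Y)) (phi (Mo Y)) A a (h \<cdot> mu Y)"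
    using assms by (intro alg_hom_comp[of _ _ "Mo Y" "phi Y"] alg_hom_sharp) auto
  show "(sh A a \<cdot> Mm h) \<cdot> eta (Mo Y) = (h \<cdot> mu Y) \<cdot> eta (Mo Y)"
    using assms h by simp
qed (use assms in auto)

lemma sharp_M_comp:
  assumes "obj Y" "alg A a" "alg_hom (Mo Y) (phi Y) A a h" "arr e" "cd e = Mo Y"
  shows "sh A a \<cdot> Mm (h \<cdot> e) = h \<cdot> mu Y \<cdot> Mm e"
proof -
  have h: "arr h" "dm h = Mo Y" "cd h = A" using assms(3) by (auto simp: alg_hom_iff)
  have "sh A a \<cdot> Mm (h \<cdot> e) = (sh A a \<cdot> Mm h) \<cdot> Mm e"
    using assms h by simp
  also have "\<dots> = h \<cdot> mu Y \<cdot> Mm e"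
    using sharp_M_alg_hom[OF assms(1-3)] assms h by simp
  finally show ?thesis .
qed

lemma mu_natural:
  assumes "arr f"
  shows "Mm f \<cdot> mu (dm f) = mu (cd f) \<cdot> Mm (Mm f)"
proof -
  have "alg_hom (Mo (dm f)) (phi (dm f)) (Mo (cd f)) (phi (cd f)) (Mm f)"
    using assms by (intro alg_hom_M) auto
  from sharp_M_alg_hom[OF _ _ this] assms show ?thesis by simp
qed

lemma mu_M_eta [simp]: "obj X \<Longrightarrow> mu X \<cdot> Mm (eta X) = I (Mo X)"
proof (rule free_alg_hom_ext[of X "Mo X" "phi X"])
  show "obj X \<Longrightarrow> alg_hom (Mo X) (phi X) (Mo X) (phi X) (mu X \<cdot> Mm (eta X))"
    by (intro alg_hom_comp[of _ _ "Mo (Mo X)" "phi (Mo X)"] alg_hom_M alg_hom_sharp) auto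
qed (auto intro: alg_hom_I)

lemma mu_assoc: "obj X \<Longrightarrow> mu X \<cdot> Mm (mu X) = mu X \<cdot> mu (Mo X)"
  using sharp_M_alg_hom[of "Mo X" "Mo X" "phi X" "mu X"] alg_hom_sharp by auto

lemma sharp_phi_K_eta:
  assumes "alg A a"
  shows "sh A a \<cdot> phi A \<cdot> Km (eta A) = a"
proof -
  have A: "obj A" "arr a" "dm a = Ko A" "cd a = A"
    using assms obj_alg by (auto simp: alg_iff)
  have "sh A a \<cdot> phi A \<cdot> Km (eta A) = a \<cdot> Km (sh A a) \<cdot> Km (eta A)"
    using assms A by simp
  also have "Km (sh A a) \<cdot> Km (eta A) = I (Ko A)"
    using K.map_comp[of "eta A" "sh A a"] assms A by simp
  finally show ?thesis using A by simp
qed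

end

locale terminal_coalgebra = category \<A> + H: endofunctor \<A> Ho Hm
  for \<A> :: "('o, 'm) category" and Ho :: "'o \<Rightarrow> 'o" and Hm :: "'m \<Rightarrow> 'm" +
  fixes C :: 'o and c :: 'm
  assumes is_terminal_coalg: "is_terminal_coalg \<A> Ho Hm C c"
begin

lemma obj_C [simp]: "obj C"
  and arr_c [simp]: "arr c"
  and dm_c [simp]: "dm c = C"
  and cd_c [simp]: "cd c = Ho C"
  using is_terminal_coalg unfolding is_terminal_coalg_def hom_iff by auto

lemma coalg_hom_ex1:
  assumes "arr a" "dm a = A" "cd a = Ho A"
  shows "\<exists>!h. arr h \<and> dm h = A \<and> cd h = C \<and> c \<cdot> h = Hm h \<cdot> a"
proof -
  have "obj A" using assms by auto
  then show ?thesis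
    using is_terminal_coalg assms unfolding is_terminal_coalg_def hom_iff by blast
qed

lemma coalg_hom_unique:
  assumes "arr a" "dm a = A" "cd a = Ho A"
    and "arr h1" "dm h1 = A" "cd h1 = C" "c \<cdot> h1 = Hm h1 \<cdot> a"
    and "arr h2" "dm h2 = A" "cd h2 = C" "c \<cdot> h2 = Hm h2 \<cdot> a"
  shows "h1 = h2"
  using coalg_hom_ex1[OF assms(1-3)] assms(4-) by blast

abbreviation ci where "ci \<equiv> inverse_mor \<A> c"

lemma lambek: "arr ci \<and> dm ci = Ho C \<and> cd ci = C \<and> ci \<cdot> c = I C \<and> c \<cdot> ci = I (Ho C)"
proof -
  obtain h where h: "arr h" "dm h = Ho C" "cd h = C" "c \<cdot> h = Hm h \<cdot> Hm c"
    using coalg_hom_ex1[of "Hm c" "Ho C"] by auto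
  have hc: "h \<cdot> c = I C"
  proof (rule coalg_hom_unique[of c C])
    have "c \<cdot> h \<cdot> c = Hm h \<cdot> Hm c \<cdot> c"
      by (rule comp_reassoc2) (use h in auto)
    then show "c \<cdot> h \<cdot> c = Hm (h \<cdot> c) \<cdot> c" using h by simp
  qed (use h in auto)
  have "c \<cdot> h = Hm (h \<cdot> c)"
    using h by simp
  then have ch: "c \<cdot> h = I (Ho C)"
    using hc by simp
  have "ci = h"
    unfolding inverse_mor_def
  proof (rule the_equality)
    fix g
    assume "hom \<A> g (cd c) (dm c) \<and> g \<cdot> c = I (dm c) \<and> c \<cdot> g = I (cd c)"
    then have g: "arr g" "dm g = Ho C" "cd g = C" "g \<cdot> c = I C"
      by (auto simp: hom_iff)
    have "g = g \<cdot> c \<cdot> h" using g h(1-3) ch by simp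
    also have "\<dots> = I C \<cdot> h" by (rule comp_reassoc) (use g h in auto)
    finally show "g = h" using h by simp
  qed (use h hc ch in \<open>simp add: hom_iff\<close>)
  then show ?thesis using h hc ch by simp
qed

lemma arr_ci [simp]: "arr ci"
  and dm_ci [simp]: "dm ci = Ho C"
  and cd_ci [simp]: "cd ci = C"
  and ci_c [simp]: "ci \<cdot> c = I C"
  and c_ci [simp]: "c \<cdot> ci = I (Ho C)"
  using lambek by auto

lemma ci_c' [simp]: "arr w \<Longrightarrow> cd w = C \<Longrightarrow> ci \<cdot> c \<cdot> w = w"
  and c_ci' [simp]: "arr w \<Longrightarrow> cd w = Ho C \<Longrightarrow> c \<cdot> ci \<cdot> w = w"
  using comp_assoc[of w c ci] comp_assoc[of w ci c] by auto

lemma c_comp_eq_iff: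
  assumes "arr s" "cd s = C" "arr r" "cd r = Ho C"
  shows "c \<cdot> s = r \<longleftrightarrow> s = ci \<cdot> r"
proof
  assume "c \<cdot> s = r"
  then have "ci \<cdot> c \<cdot> s = ci \<cdot> r"
    by (rule arg_cong)
  then show "s = ci \<cdot> r"
    using assms by simp
next
  assume "s = ci \<cdot> r"
  then have "c \<cdot> s = c \<cdot> ci \<cdot> r"
    by (rule arg_cong)
  then show "c \<cdot> s = r"
    using assms by simp
qed

end

locale gsos_rule =
  cartesian_category \<A> P p1 p2 + free_algebras \<A> Ko Km Mo phi eta + H: endofunctor \<A> Ho Hm
  for \<A> :: "('o, 'm) category" and P :: "'o \<Rightarrow> 'o \<Rightarrow> 'o" and p1 p2 :: "'o \<Rightarrow> 'o \<Rightarrow> 'm"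
    and Ko :: "'o \<Rightarrow> 'o" and Km :: "'m \<Rightarrow> 'm" and Mo :: "'o \<Rightarrow> 'o" and phi eta :: "'o \<Rightarrow> 'm"
    and Ho :: "'o \<Rightarrow> 'o" and Hm :: "'m \<Rightarrow> 'm" +
  fixes l :: "'o \<Rightarrow> 'm"
  assumes is_gsos_rule: "is_gsos_rule \<A> P p1 p2 Ho Hm Ko Km Mo phi eta l"
begin

abbreviation Q where "Q Y \<equiv> P (Ho Y) Y"

lemma arr_l [simp]: "obj X \<Longrightarrow> arr (l X)"
  and dm_l [simp]: "obj X \<Longrightarrow> dm (l X) = Ko (Q X)"
  and cd_l [simp]: "obj X \<Longrightarrow> cd (l X) = Ho (Mo X)"
  using is_gsos_rule unfolding is_gsos_rule_def hom_iff by auto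

lemma prodId_mor_eq_cross: "arr f \<Longrightarrow> prodId_mor \<A> P p1 p2 Ho Hm f = cross (Hm f) f"
  unfolding prodId_mor_def cross_def by simp

lemma l_natural:
  assumes "arr f"
  shows "l (cd f) \<cdot> Km (cross (Hm f) f) = Hm (Mm f) \<cdot> l (dm f)"
proof -
  have "l (cd f) \<cdot> Km (prodId_mor \<A> P p1 p2 Ho Hm f) = Hm (Mm f) \<cdot> l (dm f)"
    using is_gsos_rule assms unfolding is_gsos_rule_def hom_iff by blast
  then show ?thesis using assms by (simp add: prodId_mor_eq_cross)
qed

lemma H_M_eta [simp]:
  assumes "arr f" "dm f = A"
  shows "Hm (Mm f) \<cdot> Hm (eta A) = Hm (eta (cd f)) \<cdot> Hm f"
proof -
  have "obj A" using assms by auto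
  then have "Hm (Mm f) \<cdot> Hm (eta A) = Hm (Mm f \<cdot> eta A)"
    using assms by (simp del: M_eta)
  also have "\<dots> = Hm (eta (cd f)) \<cdot> Hm f"
    using assms \<open>obj A\<close> by simp
  finally show ?thesis .
qed

lemma H_sharp_eta [simp]: "alg A a \<Longrightarrow> Hm (sh A a) \<cdot> Hm (eta A) = I (Ho A)"
  using H.map_comp[of "eta A" "sh A a"] by (auto dest: obj_alg)

lemma H_sharp_eta' [simp]: "alg A a \<Longrightarrow> arr w \<Longrightarrow> cd w = Ho A \<Longrightarrow> Hm (sh A a) \<cdot> Hm (eta A) \<cdot> w = w"
  using comp_assoc[of w "Hm (eta A)" "Hm (sh A a)"] by (auto dest: obj_alg)

text \<open>The rule makes HMY \<times> MY a K-algebra; the free extension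
  rho Y : M(HY \<times> Y) \<rightarrow> HMY \<times> MY of H\<eta> \<times> \<eta> is the lifting of l along the free monad.\<close>

definition alpha where
  "alpha Y = pair (Hm (mu Y) \<cdot> l (Mo Y)) (phi Y \<cdot> Km (p2 (Ho (Mo Y)) (Mo Y)))"

lemma arr_alpha [simp]: "obj Y \<Longrightarrow> arr (alpha Y)"
  and dm_alpha [simp]: "obj Y \<Longrightarrow> dm (alpha Y) = Ko (Q (Mo Y))"
  and cd_alpha [simp]: "obj Y \<Longrightarrow> cd (alpha Y) = Q (Mo Y)"
  unfolding alpha_def by simp_all

lemma alg_alpha [simp]: "obj Y \<Longrightarrow> alg (Q (Mo Y)) (alpha Y)"
  unfolding alg_iff by simp

definition rho where
  "rho Y = (THE h. alg_hom (Mo (Q Y)) (phi (Q Y)) (Q (Mo Y)) (alpha Y) h \<and>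
                   h \<cdot> eta (Q Y) = cross (Hm (eta Y)) (eta Y))"

lemma rho_props:
  assumes "obj Y"
  shows "alg_hom (Mo (Q Y)) (phi (Q Y)) (Q (Mo Y)) (alpha Y) (rho Y) \<and>
    rho Y \<cdot> eta (Q Y) = cross (Hm (eta Y)) (eta Y)"
  unfolding rho_def by (rule theI'[OF free_alg_universal]) (use assms in auto)

lemma arr_rho [simp]: "obj Y \<Longrightarrow> arr (rho Y)"
  and dm_rho [simp]: "obj Y \<Longrightarrow> dm (rho Y) = Mo (Q Y)"
  and cd_rho [simp]: "obj Y \<Longrightarrow> cd (rho Y) = Q (Mo Y)"
  using rho_props by (auto simp: alg_hom_iff)

lemma alg_hom_rho: "obj Y \<Longrightarrow> alg_hom (Mo (Q Y)) (phi (Q Y)) (Q (Mo Y)) (alpha Y) (rho Y)"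
  using rho_props by blast

lemma rho_eta [simp]: "obj Y \<Longrightarrow> rho Y \<cdot> eta (Q Y) = cross (Hm (eta Y)) (eta Y)"
  using rho_props by blast

lemma rho_eta' [simp]: "obj Y \<Longrightarrow> arr w \<Longrightarrow> cd w = Q Y \<Longrightarrow>
    rho Y \<cdot> eta (Q Y) \<cdot> w = cross (Hm (eta Y)) (eta Y) \<cdot> w"
  by (rule comp_reassoc) auto

lemma p2_rho: "obj Y \<Longrightarrow> p2 (Ho (Mo Y)) (Mo Y) \<cdot> rho Y = Mm (p2 (Ho Y) Y)"
proof (rule free_alg_hom_ext[of "Q Y" "Mo Y" "phi Y"])
  assume Y: "obj Y"
  have "alg_hom (Q (Mo Y)) (alpha Y) (Mo Y) (phi Y) (p2 (Ho (Mo Y)) (Mo Y))"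
    using Y unfolding alg_hom_iff alpha_def by simp
  then show "alg_hom (Mo (Q Y)) (phi (Q Y)) (Mo Y) (phi Y) (p2 (Ho (Mo Y)) (Mo Y) \<cdot> rho Y)"
    using Y by (intro alg_hom_comp[OF alg_hom_rho]) auto
qed (auto intro: alg_hom_M)

lemma cross_M_alg_hom:
  assumes f: "arr f" "dm f = Y" "cd f = Y'"
  shows "alg_hom (Q (Mo Y)) (alpha Y) (Q (Mo Y')) (alpha Y') (cross (Hm (Mm f)) (Mm f))"
proof -
  have Y: "obj Y" "obj Y'" using f by auto
  let ?p1 = "p1 (Ho (Mo Y')) (Mo Y')" and ?p2 = "p2 (Ho (Mo Y')) (Mo Y')"
  let ?x = "cross (Hm (Mm f)) (Mm f)"
  have "?p1 \<cdot> ?x \<cdot> alpha Y = Hm (Mm f) \<cdot> Hm (mu Y) \<cdot> l (Mo Y)"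
    using f Y by (simp add: alpha_def)
  also have "\<dots> = Hm (Mm f \<cdot> mu Y) \<cdot> l (Mo Y)"
    using f Y by simp
  also have "\<dots> = Hm (mu Y') \<cdot> Hm (Mm (Mm f)) \<cdot> l (Mo Y)"
    using f Y mu_natural[of f] by simp
  also have "\<dots> = ?p1 \<cdot> alpha Y' \<cdot> Km ?x"
    using f Y l_natural[of "Mm f"] by (simp add: alpha_def)
  finally have e1: "?p1 \<cdot> ?x \<cdot> alpha Y = ?p1 \<cdot> alpha Y' \<cdot> Km ?x" .
  have "?p2 \<cdot> ?x \<cdot> alpha Y = phi Y' \<cdot> Km (Mm f) \<cdot> Km (p2 (Ho (Mo Y)) (Mo Y))"
    using f Y by (simp add: alpha_def)
  also have "\<dots> = phi Y' \<cdot> Km (Mm f \<cdot> p2 (Ho (Mo Y)) (Mo Y))"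
    using f Y by simp
  also have "\<dots> = phi Y' \<cdot> Km (?p2 \<cdot> ?x)"
    using f Y by simp
  also have "\<dots> = phi Y' \<cdot> Km ?p2 \<cdot> Km ?x"
    using f Y by (subst K.map_comp) auto
  also have "\<dots> = ?p2 \<cdot> alpha Y' \<cdot> Km ?x"
    using f Y by (simp add: alpha_def)
  finally have e2: "?p2 \<cdot> ?x \<cdot> alpha Y = ?p2 \<cdot> alpha Y' \<cdot> Km ?x" .
  have "?x \<cdot> alpha Y = alpha Y' \<cdot> Km ?x"
    by (rule product_ext[of "Ho (Mo Y')" "Mo Y'"]) (use f Y e1 e2 in auto)
  then show ?thesis using f Y unfolding alg_hom_iff by simp
qed

lemma rho_natural:
  assumes f: "arr f" "dm f = Y" "cd f = Y'"
  shows "rho Y' \<cdot> Mm (cross (Hm f) f) = cross (Hm (Mm f)) (Mm f) \<cdot> rho Y"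
proof (rule free_alg_hom_ext[of "Q Y" "Q (Mo Y')" "alpha Y'"])
  show "alg_hom (Mo (Q Y)) (phi (Q Y)) (Q (Mo Y')) (alpha Y') (rho Y' \<cdot> Mm (cross (Hm f) f))"
    using f by (intro alg_hom_comp[OF alg_hom_M alg_hom_rho]) auto
  show "alg_hom (Mo (Q Y)) (phi (Q Y)) (Q (Mo Y')) (alpha Y') (cross (Hm (Mm f)) (Mm f) \<cdot> rho Y)"
    using f by (intro alg_hom_comp[OF alg_hom_rho cross_M_alg_hom]) auto
qed (use f in auto)

definition lift where
  "lift V u = p1 (Ho (Mo V)) (Mo V) \<cdot> rho V \<cdot> Mm u"

lemma arr_lift [simp]: "obj V \<Longrightarrow> arr u \<Longrightarrow> cd u = Q V \<Longrightarrow> arr (lift V u)"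
  and dm_lift [simp]: "obj V \<Longrightarrow> arr u \<Longrightarrow> cd u = Q V \<Longrightarrow> dm (lift V u) = Mo (dm u)"
  and cd_lift [simp]: "obj V \<Longrightarrow> arr u \<Longrightarrow> cd u = Q V \<Longrightarrow> cd (lift V u) = Ho (Mo V)"
  unfolding lift_def by simp_all

lemma lift_natural:
  assumes "arr g" "dm g = V" "arr u" "cd u = Q V"
  shows "Hm (Mm g) \<cdot> lift V u = lift (cd g) (cross (Hm g) g \<cdot> u)"
proof -
  have V: "obj V" using assms by auto
  have "lift (cd g) (cross (Hm g) g \<cdot> u) =
      p1 (Ho (Mo (cd g))) (Mo (cd g)) \<cdot> (rho (cd g) \<cdot> Mm (cross (Hm g) g)) \<cdot> Mm u"
    unfolding lift_def using assms V by simp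
  also have "rho (cd g) \<cdot> Mm (cross (Hm g) g) = cross (Hm (Mm g)) (Mm g) \<cdot> rho V"
    using assms by (intro rho_natural) auto
  finally show ?thesis
    unfolding lift_def using assms V by simp
qed

lemma lift_comp_M:
  assumes "obj V" "arr u" "cd u = Q V" "arr k" "cd k = dm u"
  shows "lift V u \<cdot> Mm k = lift V (u \<cdot> k)"
  unfolding lift_def using assms by simp

lemma rho_M_pair:
  assumes "obj V" "arr x" "arr y" "dm x = dm y" "cd x = Ho V" "cd y = V"
  shows "rho V \<cdot> Mm (pair x y) = pair (lift V (pair x y)) (Mm y)"
proof (rule pair_unique)
  have "p2 (Ho (Mo V)) (Mo V) \<cdot> rho V \<cdot> Mm (pair x y) = Mm (p2 (Ho V) V) \<cdot> Mm (pair x y)"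
    by (rule comp_reassoc) (use assms p2_rho in auto)
  also have "\<dots> = Mm (p2 (Ho V) V \<cdot> pair x y)"
    using assms by (intro M_comp[symmetric]) auto
  finally show "p2 (Ho (Mo V)) (Mo V) \<cdot> rho V \<cdot> Mm (pair x y) = Mm y"
    using assms by simp
qed (use assms in \<open>auto simp: lift_def\<close>)

definition bialgebra where
  "bialgebra Z a z \<longleftrightarrow> alg Z a \<and> arr z \<and> dm z = Z \<and> cd z = Ho Z \<and>
     z \<cdot> a = Hm (sh Z a) \<cdot> l Z \<cdot> Km (pair z (I Z))"

definition beta where
  "beta Z a = pair (Hm (sh Z a) \<cdot> l Z) (a \<cdot> Km (p2 (Ho Z) Z))"

lemma arr_beta [simp]: "alg Z a \<Longrightarrow> arr (beta Z a)"
  and dm_beta [simp]: "alg Z a \<Longrightarrow> dm (beta Z a) = Ko (Q Z)"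
  and cd_beta [simp]: "alg Z a \<Longrightarrow> cd (beta Z a) = Q Z"
  unfolding beta_def by (auto simp: alg_iff dest: obj_alg)

lemma alg_beta [simp]: "alg Z a \<Longrightarrow> alg (Q Z) (beta Z a)"
  by (simp add: alg_iff[of "Q Z"])

lemma cross_sharp_alg_hom:
  assumes a: "alg Z a"
  shows "alg_hom (Q (Mo Z)) (alpha Z) (Q Z) (beta Z a) (cross (Hm (sh Z a)) (sh Z a))"
proof -
  have Z: "obj Z" "arr a" "dm a = Ko Z" "cd a = Z"
    using a obj_alg by (auto simp: alg_iff)
  let ?s = "sh Z a" and ?p1 = "p1 (Ho Z) Z" and ?p2 = "p2 (Ho Z) Z"
  let ?x = "cross (Hm ?s) ?s"
  have "?p1 \<cdot> ?x \<cdot> alpha Z = Hm (?s \<cdot> mu Z) \<cdot> l (Mo Z)"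
    using a Z by (simp add: alpha_def)
  also have "\<dots> = Hm (?s \<cdot> Mm ?s) \<cdot> l (Mo Z)"
    using a Z sharp_M_alg_hom[OF _ a alg_hom_sharp[OF a]] by simp
  also have "\<dots> = ?p1 \<cdot> beta Z a \<cdot> Km ?x"
    using a Z l_natural[of ?s] by (simp add: beta_def)
  finally have e1: "?p1 \<cdot> ?x \<cdot> alpha Z = ?p1 \<cdot> beta Z a \<cdot> Km ?x" .
  have "?p2 \<cdot> ?x \<cdot> alpha Z = a \<cdot> Km (?s \<cdot> p2 (Ho (Mo Z)) (Mo Z))"
    using a Z by (simp add: alpha_def)
  also have "\<dots> = a \<cdot> Km (?p2 \<cdot> ?x)"
    using a Z by simp
  also have "\<dots> = a \<cdot> Km ?p2 \<cdot> Km ?x"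
    using a Z by (subst K.map_comp) auto
  also have "\<dots> = ?p2 \<cdot> beta Z a \<cdot> Km ?x"
    using a Z by (simp add: beta_def)
  finally have e2: "?p2 \<cdot> ?x \<cdot> alpha Z = ?p2 \<cdot> beta Z a \<cdot> Km ?x" .
  have "?x \<cdot> alpha Z = beta Z a \<cdot> Km ?x"
    by (rule product_ext[of "Ho Z" Z]) (use a Z e1 e2 in auto)
  then show ?thesis
    using a Z unfolding alg_hom_iff by simp
qed

lemma bialgebra_coalg_sharp:
  assumes bi: "bialgebra Z a z"
  shows "z \<cdot> sh Z a = Hm (sh Z a) \<cdot> lift Z (pair z (I Z))"
proof -
  have a: "alg Z a" and z: "arr z" "dm z = Z" "cd z = Ho Z"
    and za: "z \<cdot> a = Hm (sh Z a) \<cdot> l Z \<cdot> Km (pair z (I Z))"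
    using bi unfolding bialgebra_def by auto
  have Z: "obj Z" "arr a" "dm a = Ko Z" "cd a = Z"
    using a obj_alg by (auto simp: alg_iff)
  let ?s = "sh Z a" and ?p1 = "p1 (Ho Z) Z" and ?p2 = "p2 (Ho Z) Z"
  let ?h1 = "pair (z \<cdot> ?s) ?s"
  let ?h2 = "cross (Hm ?s) ?s \<cdot> rho Z \<cdot> Mm (pair z (I Z))"
  have h1_h2: "?h1 = ?h2"
  proof (rule free_alg_hom_ext[of Z "Q Z" "beta Z a"])
    have "?p1 \<cdot> ?h1 \<cdot> phi Z = (z \<cdot> a) \<cdot> Km ?s"
      using a z Z by simp
    also have "\<dots> = Hm ?s \<cdot> l Z \<cdot> Km (pair z (I Z)) \<cdot> Km ?s"
      using a z Z za by simp
    also have "\<dots> = Hm ?s \<cdot> l Z \<cdot> Km (pair z (I Z) \<cdot> ?s)"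
      using a z Z by (subst K.map_comp) auto
    also have "\<dots> = ?p1 \<cdot> beta Z a \<cdot> Km ?h1"
      using a z Z by (simp add: beta_def)
    finally have e1: "?p1 \<cdot> ?h1 \<cdot> phi Z = ?p1 \<cdot> beta Z a \<cdot> Km ?h1" .
    have "?p2 \<cdot> ?h1 \<cdot> phi Z = a \<cdot> Km (?p2 \<cdot> ?h1)"
      using a z Z by simp
    also have "\<dots> = a \<cdot> Km ?p2 \<cdot> Km ?h1"
      using a z Z by (subst K.map_comp) auto
    also have "\<dots> = ?p2 \<cdot> beta Z a \<cdot> Km ?h1"
      using a z Z by (simp add: beta_def)
    finally have e2: "?p2 \<cdot> ?h1 \<cdot> phi Z = ?p2 \<cdot> beta Z a \<cdot> Km ?h1" .
    have "?h1 \<cdot> phi Z = beta Z a \<cdot> Km ?h1"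
      by (rule product_ext[of "Ho Z" Z]) (use a z Z e1 e2 in auto)
    then show "alg_hom (Mo Z) (phi Z) (Q Z) (beta Z a) ?h1"
      using a z Z unfolding alg_hom_iff by simp
    show "alg_hom (Mo Z) (phi Z) (Q Z) (beta Z a) ?h2"
      using a z Z
      by (intro alg_hom_comp[OF alg_hom_comp[OF alg_hom_M alg_hom_rho] cross_sharp_alg_hom]) auto
    show "?h1 \<cdot> eta Z = ?h2 \<cdot> eta Z"
      using a z Z by simp
  qed (use a Z in auto)
  have "z \<cdot> ?s = ?p1 \<cdot> ?h1"
    using a z Z by simp
  also have "\<dots> = ?p1 \<cdot> ?h2"
    by (simp only: h1_h2)
  finally show ?thesis
    using a z Z by (simp add: lift_def)
qed

definition zeta where
  "zeta Y xi = Hm (mu Y) \<cdot> lift (Mo Y) (pair xi (eta Y))"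

lemma arr_zeta [simp]: "obj Y \<Longrightarrow> arr xi \<Longrightarrow> dm xi = Y \<Longrightarrow> cd xi = Ho (Mo Y) \<Longrightarrow> arr (zeta Y xi)"
  and dm_zeta [simp]: "obj Y \<Longrightarrow> arr xi \<Longrightarrow> dm xi = Y \<Longrightarrow> cd xi = Ho (Mo Y) \<Longrightarrow> dm (zeta Y xi) = Mo Y"
  and cd_zeta [simp]: "obj Y \<Longrightarrow> arr xi \<Longrightarrow> dm xi = Y \<Longrightarrow> cd xi = Ho (Mo Y) \<Longrightarrow>
    cd (zeta Y xi) = Ho (Mo Y)"
  unfolding zeta_def by auto

lemma zeta_eta:
  assumes "obj Y" "arr xi" "dm xi = Y" "cd xi = Ho (Mo Y)"
  shows "zeta Y xi \<cdot> eta Y = xi"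
  using assms unfolding zeta_def lift_def by simp

lemma bialgebra_zeta:
  assumes Y: "obj Y" and xi: "arr xi" "dm xi = Y" "cd xi = Ho (Mo Y)"
  shows "bialgebra (Mo Y) (phi Y) (zeta Y xi)"
proof -
  let ?u = "pair xi (eta Y)"
  let ?R = "rho (Mo Y) \<cdot> Mm ?u"
  have u: "arr ?u" "dm ?u = Y" "cd ?u = Q (Mo Y)"
    using Y xi by auto
  have R: "arr ?R" "dm ?R = Mo Y" "cd ?R = Q (Mo (Mo Y))"
    using Y u by auto
  have "alg_hom (Mo Y) (phi Y) (Q (Mo (Mo Y))) (alpha (Mo Y)) ?R"
    using Y u by (intro alg_hom_comp[OF alg_hom_M alg_hom_rho]) auto
  then have "zeta Y xi \<cdot> phi Y = Hm (mu Y) \<cdot> p1 (Ho (Mo (Mo Y))) (Mo (Mo Y)) \<cdot> alpha (Mo Y) \<cdot> Km ?R"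
    using Y u R unfolding zeta_def lift_def alg_hom_iff by simp
  also have "\<dots> = Hm (mu Y \<cdot> mu (Mo Y)) \<cdot> l (Mo (Mo Y)) \<cdot> Km ?R"
    using Y R by (simp add: alpha_def)
  also have "\<dots> = Hm (mu Y \<cdot> Mm (mu Y)) \<cdot> l (Mo (Mo Y)) \<cdot> Km ?R"
    using Y mu_assoc by simp
  also have "\<dots> = Hm (mu Y) \<cdot> (Hm (Mm (mu Y)) \<cdot> l (Mo (Mo Y))) \<cdot> Km ?R"
    using Y R by simp
  also have "Hm (Mm (mu Y)) \<cdot> l (Mo (Mo Y)) = l (Mo Y) \<cdot> Km (cross (Hm (mu Y)) (mu Y))"
    using Y l_natural[of "mu Y"] by simp
  also have "Hm (mu Y) \<cdot> (l (Mo Y) \<cdot> Km (cross (Hm (mu Y)) (mu Y))) \<cdot> Km ?R =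
      Hm (mu Y) \<cdot> l (Mo Y) \<cdot> Km (cross (Hm (mu Y)) (mu Y) \<cdot> ?R)"
    using Y R by simp
  also have "cross (Hm (mu Y)) (mu Y) \<cdot> ?R = pair (zeta Y xi) (I (Mo Y))"
    using Y xi rho_M_pair[of "Mo Y" xi "eta Y"] unfolding zeta_def by simp
  finally show ?thesis
    unfolding bialgebra_def using Y xi by simp
qed

end

locale gsos_interpretation =
  gsos_rule \<A> P p1 p2 Ko Km Mo phi eta Ho Hm l + terminal_coalgebra \<A> Ho Hm C c
  for \<A> :: "('o, 'm) category" and P :: "'o \<Rightarrow> 'o \<Rightarrow> 'o" and p1 p2 :: "'o \<Rightarrow> 'o \<Rightarrow> 'm"
    and Ko :: "'o \<Rightarrow> 'o" and Km :: "'m \<Rightarrow> 'm" and Mo :: "'o \<Rightarrow> 'o" and phi eta :: "'o \<Rightarrow> 'm"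
    and Ho :: "'o \<Rightarrow> 'o" and Hm :: "'m \<Rightarrow> 'm" and l :: "'o \<Rightarrow> 'm" and C :: 'o and c :: 'm +
  fixes b :: 'm
  assumes is_interpretation: "is_interpretation \<A> P p1 p2 Ho Hm Ko Km Mo phi eta l C c b"
begin

lemma arr_b [simp]: "arr b"
  and dm_b [simp]: "dm b = Ko C"
  and cd_b [simp]: "cd b = C"
  using is_interpretation unfolding is_interpretation_def hom_iff by auto

lemma alg_b [simp]: "alg C b"
  by (simp add: alg_iff)

lemma bialgebra_C: "bialgebra C b c"
  using is_interpretation unfolding bialgebra_def is_interpretation_def by simp

lemma c_sharp_M:
  assumes g: "arr g" "dm g = V" "cd g = C" and u: "arr u" "cd u = Q V"
    and k: "arr k" "cd k = C" and ck: "pair (c \<cdot> k) k = cross (Hm g) g \<cdot> u"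
  shows "c \<cdot> sh C b \<cdot> Mm k = Hm (sh C b \<cdot> Mm g) \<cdot> lift V u"
proof -
  have V: "obj V" using g by auto
  have "c \<cdot> sh C b \<cdot> Mm k = Hm (sh C b) \<cdot> lift C (pair c (I C)) \<cdot> Mm k"
    by (rule comp_reassoc2) (use bialgebra_coalg_sharp[OF bialgebra_C] k in auto)
  also have "lift C (pair c (I C)) \<cdot> Mm k = lift C (cross (Hm g) g \<cdot> u)"
    using k ck by (simp add: lift_comp_M)
  also have "\<dots> = Hm (Mm g) \<cdot> lift V u"
    using g u by (simp add: lift_natural)
  finally show ?thesis
    using g u V by simp
qed

lemma coalg_hom_is_alg_hom:
  assumes bi: "bialgebra Z a z" and g: "arr g" "dm g = Z" "cd g = C" and cg: "c \<cdot> g = Hm g \<cdot> z"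
  shows "g \<cdot> a = b \<cdot> Km g"
proof -
  have a: "alg Z a" and z: "arr z" "dm z = Z" "cd z = Ho Z"
    using bi unfolding bialgebra_def by auto
  have Z: "obj Z" "arr a" "dm a = Ko Z" "cd a = Z"
    using a obj_alg by (auto simp: alg_iff)
  let ?s = "sh Z a" and ?w = "lift Z (pair z (I Z))"
  have w: "arr ?w" "dm ?w = Mo Z" "cd ?w = Ho (Mo Z)"
    using Z z by auto
  have gs: "g \<cdot> ?s = sh C b \<cdot> Mm g"
  proof (rule coalg_hom_unique[OF w])
    have "c \<cdot> g \<cdot> ?s = Hm g \<cdot> z \<cdot> ?s"
      by (rule comp_reassoc2) (use a g z cg in auto)
    also have "\<dots> = Hm (g \<cdot> ?s) \<cdot> ?w"
      using bialgebra_coalg_sharp[OF bi] a g w by simp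
    finally show "c \<cdot> g \<cdot> ?s = Hm (g \<cdot> ?s) \<cdot> ?w" .
    show "c \<cdot> sh C b \<cdot> Mm g = Hm (sh C b \<cdot> Mm g) \<cdot> ?w"
      by (rule c_sharp_M) (use Z z g cg in auto)
  qed (use a g in auto)
  have "g \<cdot> a = (g \<cdot> ?s) \<cdot> phi Z \<cdot> Km (eta Z)"
    using sharp_phi_K_eta[OF a] a g Z by simp
  also have "\<dots> = b \<cdot> Km (sh C b) \<cdot> Km (Mm g) \<cdot> Km (eta Z)"
    using gs g Z by simp
  also have "Km (Mm g) \<cdot> Km (eta Z) = Km (Mm g \<cdot> eta Z)"
    using g Z by (simp del: M_eta)
  also have "Km (sh C b) \<cdot> Km (Mm g \<cdot> eta Z) = Km (sh C b \<cdot> Mm g \<cdot> eta Z)"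
    using g Z by (simp del: M_eta)
  finally show ?thesis
    using g Z by simp
qed

lemma alg_hom_is_coalg_hom:
  assumes Y: "obj Y" and xi: "arr xi" "dm xi = Y" "cd xi = Ho (Mo Y)"
    and h: "alg_hom (Mo Y) (phi Y) C b h" and ch: "c \<cdot> h \<cdot> eta Y = Hm h \<cdot> xi"
  shows "c \<cdot> h = Hm h \<cdot> zeta Y xi"
proof -
  have h': "arr h" "dm h = Mo Y" "cd h = C"
    using h by (auto simp: alg_hom_iff)
  have "sh C b \<cdot> Mm (h \<cdot> eta Y) = h"
    using sharp_M_comp[OF Y alg_b h, of "eta Y"] Y h' by simp
  then have "c \<cdot> h = c \<cdot> sh C b \<cdot> Mm (h \<cdot> eta Y)"
    by simp
  also have "\<dots> = Hm (sh C b \<cdot> Mm h) \<cdot> lift (Mo Y) (pair xi (eta Y))"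
  proof (rule c_sharp_M)
    show "pair (c \<cdot> h \<cdot> eta Y) (h \<cdot> eta Y) = cross (Hm h) h \<cdot> pair xi (eta Y)"
      using Y xi h' ch by simp
  qed (use Y xi h' in auto)
  also have "sh C b \<cdot> Mm h = h \<cdot> mu Y"
    using sharp_M_alg_hom[OF Y alg_b h] .
  finally show ?thesis
    unfolding zeta_def using Y xi h' by simp
qed

theorem guarded_equation_unique_solution:
  assumes Y: "obj Y" and xi: "arr xi" "dm xi = Y" "cd xi = Ho (Mo Y)"
  shows "\<exists>!s. arr s \<and> dm s = Y \<and> cd s = C \<and> c \<cdot> s = Hm (sh C b \<cdot> Mm s) \<cdot> xi"
proof -
  let ?z = "zeta Y xi"
  have z: "arr ?z" "dm ?z = Mo Y" "cd ?z = Ho (Mo Y)"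
    using Y xi by auto
  obtain g where g: "arr g" "dm g = Mo Y" "cd g = C" and cg: "c \<cdot> g = Hm g \<cdot> ?z"
    using coalg_hom_ex1[OF z] by blast
  have g_alg: "alg_hom (Mo Y) (phi Y) C b g"
    using coalg_hom_is_alg_hom[OF bialgebra_zeta[OF Y xi] g cg] g unfolding alg_hom_iff by simp
  have g_eq: "sh C b \<cdot> Mm (g \<cdot> eta Y) = g"
    using sharp_M_comp[OF Y alg_b g_alg, of "eta Y"] Y g by simp
  show ?thesis
  proof (rule ex1I[of _ "g \<cdot> eta Y"])
    have "c \<cdot> g \<cdot> eta Y = Hm g \<cdot> ?z \<cdot> eta Y"
      by (rule comp_reassoc2) (use Y g z cg in auto)
    then show "arr (g \<cdot> eta Y) \<and> dm (g \<cdot> eta Y) = Y \<and> cd (g \<cdot> eta Y) = C \<and>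
        c \<cdot> g \<cdot> eta Y = Hm (sh C b \<cdot> Mm (g \<cdot> eta Y)) \<cdot> xi"
      using Y xi g g_eq zeta_eta[OF Y xi] by simp
  next
    fix s
    assume s: "arr s \<and> dm s = Y \<and> cd s = C \<and> c \<cdot> s = Hm (sh C b \<cdot> Mm s) \<cdot> xi"
    let ?h = "sh C b \<cdot> Mm s"
    have h_alg: "alg_hom (Mo Y) (phi Y) C b ?h"
      using s by (intro alg_hom_comp[OF alg_hom_M alg_hom_sharp]) auto
    have h_eta: "?h \<cdot> eta Y = s"
      using Y s by simp
    have "c \<cdot> ?h = Hm ?h \<cdot> ?z"
      by (rule alg_hom_is_coalg_hom[OF Y xi h_alg]) (use s h_eta in simp)
    moreover have "arr ?h" "dm ?h = Mo Y" "cd ?h = C"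
      using h_alg by (auto simp: alg_hom_iff)
    ultimately have "?h = g"
      using coalg_hom_unique[OF z _ _ _ _ g cg] by blast
    then show "s = g \<cdot> eta Y"
      using h_eta by simp
  qed
qed

theorem sandwiched_equation_unique_solution:
  assumes X: "obj X" and e: "arr e" "dm e = X" "cd e = Mo (Ho (Mo X))"
  shows "\<exists>!d. hom \<A> d X C \<and> d = sh C b \<cdot> Mm ci \<cdot> Mm (Hm (sh C b)) \<cdot> Mm (Hm (Mm d)) \<cdot> e"
proof -
  define Y where "Y = Ho (Mo X)"
  have Y: "obj Y" and e': "cd e = Mo Y" and HMX: "Ho (Mo X) = Y"
    using X e unfolding Y_def by simp_all
  define xi where "xi = Hm (mu Y \<cdot> Mm e)"
  define D where "D s = sh C b \<cdot> Mm s \<cdot> e" for s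
  define k where "k d = ci \<cdot> Hm (sh C b \<cdot> Mm d)" for d
  have xi: "arr xi" "dm xi = Y" "cd xi = Ho (Mo Y)"
    using Y e(1,2) e' HMX unfolding xi_def by auto
  have k_D: "k (D s) = ci \<cdot> Hm (sh C b \<cdot> Mm s) \<cdot> xi" if s: "arr s" "dm s = Y" "cd s = C" for s
  proof -
    have "alg_hom (Mo Y) (phi Y) C b (sh C b \<cdot> Mm s)"
      using s by (intro alg_hom_comp[OF alg_hom_M alg_hom_sharp]) auto
    from sharp_M_comp[OF Y alg_b this e(1) e']
    have "sh C b \<cdot> Mm (D s) = (sh C b \<cdot> Mm s) \<cdot> mu Y \<cdot> Mm e"
      unfolding D_def using s e(1) e' by simp
    then show ?thesis
      unfolding k_def xi_def using Y s e(1) e' by simp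
  qed
  have "k (D s) = s \<longleftrightarrow> c \<cdot> s = Hm (sh C b \<cdot> Mm s) \<cdot> xi"
    if "arr s" "dm s = Y" "cd s = C" for s
    using that xi k_D[OF that] c_comp_eq_iff[of s "Hm (sh C b \<cdot> Mm s) \<cdot> xi"] by auto
  then have "\<exists>!s. (arr s \<and> dm s = Y \<and> cd s = C) \<and> k (D s) = s"
    using guarded_equation_unique_solution[OF Y xi] by blast
  then have "\<exists>!d. hom \<A> d X C \<and> D (k d) = d"
    by (rule ex1_fixpoint_rolling) (use Y e(1,2) e' HMX in \<open>auto simp: hom_iff D_def k_def\<close>)
  moreover have "d = sh C b \<cdot> Mm ci \<cdot> Mm (Hm (sh C b)) \<cdot> Mm (Hm (Mm d)) \<cdot> e \<longleftrightarrow> D (k d) = d"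
    if "hom \<A> d X C" for d
    using that e unfolding D_def k_def hom_iff by auto
  ultimately show ?thesis
    by (simp cong: conj_cong)
qed

end

theorem mainTheorem1:
  fixes \<A> :: "('o, 'm) category"
    and P :: "'o \<Rightarrow> 'o \<Rightarrow> 'o" and p1 p2 :: "'o \<Rightarrow> 'o \<Rightarrow> 'm"
    and Ho Ko Mo :: "'o \<Rightarrow> 'o" and Hm Km :: "'m \<Rightarrow> 'm"
    and phi eta l :: "'o \<Rightarrow> 'm"
    and C :: 'o and c b :: 'm
    and X :: 'o and e :: 'm
  assumes cat: "is_category \<A>"
    and prods: "has_chosen_products \<A> P p1 p2"
    and coprods: "has_binary_coproducts \<A>"
    and H: "is_endofunctor \<A> Ho Hm"
    and K: "is_endofunctor \<A> Ko Km"
    and free: "has_free_algebras \<A> Ko Km Mo phi eta"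
    and terminal: "is_terminal_coalg \<A> Ho Hm C c"
    and rule: "is_gsos_rule \<A> P p1 p2 Ho Hm Ko Km Mo phi eta l"
    and interp: "is_interpretation \<A> P p1 p2 Ho Hm Ko Km Mo phi eta l C c b"
    and X: "X \<in> Obj \<A>"
    and e: "hom \<A> e X (Mo (Ho (Mo X)))"
  shows "\<exists>!d. hom \<A> d X C \<and>
           d = Comp \<A> (sharp \<A> Ko Km Mo phi eta C b)
                 (Comp \<A> (M_mor \<A> Ko Km Mo phi eta (inverse_mor \<A> c))
                   (Comp \<A> (M_mor \<A> Ko Km Mo phi eta (Hm (sharp \<A> Ko Km Mo phi eta C b)))
                     (Comp \<A> (M_mor \<A> Ko Km Mo phi eta (Hm (M_mor \<A> Ko Km Mo phi eta d)))
                       e)))"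
proof -
  interpret gsos_interpretation \<A> P p1 p2 Ko Km Mo phi eta Ho Hm l C c b
    using cat prods H K free terminal rule interp by unfold_locales
  show ?thesis
    using sandwiched_equation_unique_solution X e unfolding hom_iff by blast
qed

end
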